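(* Let $b_1,\dots,b_m\in\mathbb{R}^d$ be linearly independent, let $\mathcal{B}=[b_1\ \cdots\ b_m]\in\mathbb{R}^{d\times m}$, and let $\Lambda(\mathcal{B})=\{\sum_{i=1}^mc_ib_i: c_i\in\mathbb{Z}\}$. Let $L\subset\mathbb{R}^d$ be a finite set, $D,T>0$, and $$\widetilde{k}:=\big|\{f\in\Lambda(\mathcal{B}): \exists f'\in L,\ \|f'-f\|_2<D/T\}\big|.$$ Then (spectral bound) $\widetilde{k}\le|L|\cdot(1+2D/(T\sigma_{\min}(\mathcal{B})))^m$, and (volume bound) $$\widetilde{k}\le|L|\cdot(D/T+\sqrt{m}\|\mathcal{B}\|)^m\cdot\frac{\pi^{m/2}}{(m/2)!}\cdot\frac{1}{|\det(\mathcal{B})|}.$$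
   Context: $\sigma_{\min}(\mathcal{B})$ is the smallest singular value of $\mathcal{B}$, $\|\mathcal{B}\|$ is its spectral norm, $(m/2)!$ denotes $\Gamma(m/2+1)$, and $|\det(\mathcal{B})|$ denotes the $m$-dimensional volume $\sqrt{\det(\mathcal{B}^\top\mathcal{B})}$ of the fundamental parallelepiped $\{\mathcal{B}x: x\in[0,1)^m\}$ (equal to the usual $|\det\mathcal{B}|$ when $m=d$). *)

theory Defs
  imports "HOL-Analysis.Analysis"
begin

text \<open>A d x m real matrix B (type real^'m^'d) whose columns are b_1..b_m.\<close>

definition lattice :: "real^'m^'d \<Rightarrow> (real^'d) set" where
  "lattice B = {B *v c | c. \<forall>i. c $ i \<in> \<int>}"

definition sigma_min :: "real^'m^'d \<Rightarrow> real" where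
  "sigma_min B = sqrt (Min {l. \<exists>v. v \<noteq> 0 \<and> (transpose B ** B) *v v = l *\<^sub>R v})"

definition spec_norm :: "real^'m^'d \<Rightarrow> real" where
  "spec_norm B = onorm (\<lambda>x. B *v x)"

text \<open>m-dimensional volume of the fundamental parallelepiped: sqrt(det(B^T B)).\<close>
definition vol_det :: "real^'m^'d \<Rightarrow> real" where
  "vol_det B = sqrt (det (transpose B ** B))"

end

theory Submission
  imports Defs "HOL-Library.Countable" "HOL-Combinatorics.Permutations"
begin

(* Every lattice point within distance r = D/T of a point z of L is B c with c integral.
   Composing B with an isometry of its column space onto R^m gives a square matrix A with
   the same Gram matrix, so |det A| = vol_det B and sigma_min B |c| <= |A c| <= ||B|| |c|,
   and the relevant points A c lie in one ball of radius r.  Spectral bound: these points are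
   sigma_min-separated, so disjoint balls of radius sigma_min/2 around them fit into a ball of
   radius r + sigma_min/2.  Volume bound: the images under A of the unit cubes at the c are
   disjoint, each of volume |det A|, and fit into a ball of radius r + sqrt m ||B||.
   A union bound over L finishes the proof. *)

section \<open>The smallest singular value\<close>

definition eigenvalues :: "real^'n^'n \<Rightarrow> real set" where
  "eigenvalues G = {l. \<exists>v. v \<noteq> 0 \<and> G *v v = l *\<^sub>R v}"

lemma sigma_min_eq_sqrt_Min_eigenvalues:
  "sigma_min B = sqrt (Min (eigenvalues (transpose B ** B)))"
  by (simp add: sigma_min_def eigenvalues_def)

lemma symmetric_matrix_inner_commute:
  fixes G :: "real^'n^'n"
  assumes "transpose G = G"
  shows "x \<bullet> (G *v y) = (G *v x) \<bullet> y"
  by (metis assms dot_lmul_matrix inner_commute transpose_matrix_vector)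

lemma inner_gram_matrix:
  fixes B :: "real^'m^'d"
  shows "x \<bullet> ((transpose B ** B) *v y) = (B *v x) \<bullet> (B *v y)"
  by (metis dot_lmul_matrix inner_commute matrix_vector_mul_assoc transpose_matrix_vector)

lemma symmetric_gram_matrix:
  fixes B :: "real^'m^'d"
  shows "transpose (transpose B ** B) = transpose B ** B"
  by (simp only: matrix_transpose_mul transpose_transpose)

lemma finite_eigenvalues_symmetric:
  fixes G :: "real^'n^'n"
  assumes sym: "transpose G = G"
  shows "finite (eigenvalues G)"
proof -
  define ev where "ev l = (SOME v. v \<noteq> 0 \<and> G *v v = l *\<^sub>R v)" for l
  have ev: "ev l \<noteq> 0" "G *v ev l = l *\<^sub>R ev l" if "l \<in> eigenvalues G" for l
    using someI_ex[of "\<lambda>v. v \<noteq> 0 \<and> G *v v = l *\<^sub>R v"] that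
    by (auto simp: ev_def eigenvalues_def)
  have orth: "ev l \<bullet> ev l' = 0" if "l \<in> eigenvalues G" "l' \<in> eigenvalues G" "l \<noteq> l'" for l l'
  proof -
    have "l' * (ev l \<bullet> ev l') = l * (ev l \<bullet> ev l')"
      using symmetric_matrix_inner_commute[OF sym, of "ev l" "ev l'"] ev[OF that(1)] ev[OF that(2)]
      by simp
    then show ?thesis using that(3) by simp
  qed
  have "inj_on ev (eigenvalues G)"
    by (rule inj_onI) (metis ev inner_eq_zero_iff orth)
  moreover have "independent (ev ` eigenvalues G)"
    by (rule pairwise_orthogonal_independent) (auto simp: pairwise_def orthogonal_def ev intro: orth)
  ultimately show ?thesis
    using finiteI_independent finite_imageD by blast
qed

lemma eigenvector_if_attains_Rayleigh_min:
  fixes G :: "real^'n^'n"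
  assumes sym: "transpose G = G"
    and lower: "\<And>x. \<mu> * (x \<bullet> x) \<le> x \<bullet> (G *v x)"
    and attained: "x0 \<bullet> (G *v x0) = \<mu> * (x0 \<bullet> x0)"
  shows "G *v x0 = \<mu> *\<^sub>R x0"
proof -
  define w where "w = G *v x0 - \<mu> *\<^sub>R x0"
  define c where "c = w \<bullet> (G *v w) - \<mu> * (w \<bullet> w)"
  have c: "c \<ge> 0" using lower[of w] by (simp add: c_def)
  have expand: "0 \<le> 2 * t * (w \<bullet> w) + t\<^sup>2 * c" for t
  proof -
    have "x0 \<bullet> (G *v w) = (G *v x0) \<bullet> w"
      by (rule symmetric_matrix_inner_commute[OF sym])
    then have "0 \<le> (x0 + t *\<^sub>R w) \<bullet> (G *v (x0 + t *\<^sub>R w)) - \<mu> * ((x0 + t *\<^sub>R w) \<bullet> (x0 + t *\<^sub>R w))"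
      using lower[of "x0 + t *\<^sub>R w"] by simp
    also have "\<dots> = 2 * t * (w \<bullet> w) + t\<^sup>2 * c"
      using attained \<open>x0 \<bullet> (G *v w) = (G *v x0) \<bullet> w\<close>
      by (simp add: c_def w_def matrix_vector_right_distrib matrix_vector_mult_scaleR
          inner_add_left inner_add_right inner_diff_left inner_commute power2_eq_square algebra_simps)
    finally show ?thesis .
  qed
  have "w \<bullet> w = 0"
    \<comment> \<open>a quadratic \<open>2 t a + t\<^sup>2 c\<close> that is nonnegative for all \<open>t\<close> has \<open>a = 0\<close>\<close>
  proof (rule ccontr)
    assume "w \<bullet> w \<noteq> 0"
    then have pos: "w \<bullet> w > 0" by simp
    define t where "t = - (w \<bullet> w) / (c + 1)"
    have t: "t * c = - (w \<bullet> w) - t" "t < 0"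
      using c pos by (simp_all add: t_def field_simps)
    have "0 \<le> 2 * t * (w \<bullet> w) + t\<^sup>2 * c" by (rule expand)
    also have "\<dots> = 2 * t * (w \<bullet> w) + t * (- (w \<bullet> w) - t)"
      by (simp add: power2_eq_square t(1)[symmetric] algebra_simps)
    also have "\<dots> = t * ((w \<bullet> w) - t)"
      by (simp add: algebra_simps)
    also have "\<dots> < 0"
      using t(2) pos by (intro mult_neg_pos) linarith+
    finally show False by simp
  qed
  then show ?thesis by (simp add: w_def)
qed

lemma least_eigenvalue_symmetric:
  fixes G :: "real^'n^'n"
  assumes sym: "transpose G = G"
  shows "Min (eigenvalues G) \<in> eigenvalues G"
    and "Min (eigenvalues G) * (x \<bullet> x) \<le> x \<bullet> (G *v x)"
proof -
  let ?q = "\<lambda>x. x \<bullet> (G *v x)"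
  have "sphere (0::real^'n) 1 \<noteq> {}"
    by (metis ex_in_conv mem_sphere_0 norm_axis_1)
  moreover have "continuous_on (sphere 0 1) ?q"
    by (intro continuous_intros linear_continuous_on matrix_vector_mul_linear linear_linear)
  ultimately obtain x0 where x0: "norm x0 = 1" and min: "\<And>y. norm y = 1 \<Longrightarrow> ?q x0 \<le> ?q y"
    using continuous_attains_inf[of "sphere 0 1" ?q] by auto
  define \<mu> where "\<mu> = ?q x0"
  have lower: "\<mu> * (x \<bullet> x) \<le> ?q x" for x
  proof (cases "x = 0")
    case False
    have "\<mu> \<le> ?q ((1 / norm x) *\<^sub>R x)"
      unfolding \<mu>_def by (rule min) (use False in simp)
    also have "\<dots> = ?q x / (x \<bullet> x)"
      using False by (simp add: matrix_vector_mult_scaleR power2_norm_eq_inner[symmetric] power2_eq_square)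
    finally show ?thesis using False by (simp add: field_simps)
  qed simp
  have "G *v x0 = \<mu> *\<^sub>R x0"
    using x0 by (intro eigenvector_if_attains_Rayleigh_min[OF sym lower])
      (simp add: \<mu>_def power2_norm_eq_inner[symmetric])
  then have \<mu>_in: "\<mu> \<in> eigenvalues G"
    using x0 by (auto simp: eigenvalues_def intro!: exI[of _ x0])
  have "\<mu> \<le> l" if l: "l \<in> eigenvalues G" for l
  proof -
    obtain v where v: "v \<noteq> 0" "G *v v = l *\<^sub>R v"
      using l by (auto simp: eigenvalues_def)
    then show ?thesis using lower[of v] by simp
  qed
  then have "Min (eigenvalues G) = \<mu>"
    using \<mu>_in finite_eigenvalues_symmetric[OF sym] by (intro Min_eqI) auto
  then show "Min (eigenvalues G) \<in> eigenvalues G" "Min (eigenvalues G) * (x \<bullet> x) \<le> ?q x"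
    using \<mu>_in lower by simp_all
qed

text \<open>No hypothesis is needed: \<open>sqrt\<close> is odd on the reals, so \<open>real_sqrt_mult\<close> is unconditional.\<close>
lemma sigma_min_mult_norm_le: "sigma_min B * norm x \<le> norm (B *v x)"
proof -
  let ?l = "Min (eigenvalues (transpose B ** B))"
  have "sigma_min B * norm x = sqrt (?l * (x \<bullet> x))"
    by (simp add: sigma_min_eq_sqrt_Min_eigenvalues real_sqrt_mult norm_eq_sqrt_inner)
  also have "\<dots> \<le> sqrt ((B *v x) \<bullet> (B *v x))"
    using least_eigenvalue_symmetric(2)[OF symmetric_gram_matrix, of B x]
    by (simp add: inner_gram_matrix)
  finally show ?thesis by (simp add: norm_eq_sqrt_inner)
qed

lemma sigma_min_pos:
  fixes B :: "real^'m^'d"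
  assumes "inj ((*v) B)"
  shows "sigma_min B > 0"
proof -
  let ?l = "Min (eigenvalues (transpose B ** B))"
  obtain v where v: "v \<noteq> 0" "(transpose B ** B) *v v = ?l *\<^sub>R v"
    using least_eigenvalue_symmetric(1)[OF symmetric_gram_matrix, of B] by (auto simp: eigenvalues_def)
  have "B *v v \<noteq> 0"
    using assms v(1) by (metis injD matrix_vector_mult_0_right)
  moreover have "?l * (v \<bullet> v) = (B *v v) \<bullet> (B *v v)"
    using inner_gram_matrix[of v B v] v(2) by simp
  ultimately have "?l > 0"
    using v(1) by (metis inner_gt_zero_iff zero_less_mult_pos2 inner_ge_zero order_le_less)
  then show ?thesis by (simp add: sigma_min_eq_sqrt_Min_eigenvalues)
qed

section \<open>Counting integer points\<close>

definition int_vecs :: "(real^'n) set" where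
  "int_vecs = {c. \<forall>i. c $ i \<in> \<int>}"

lemma lattice_eq_image_int_vecs: "lattice B = (\<lambda>c. B *v c) ` int_vecs"
  by (auto simp: lattice_def int_vecs_def)

lemma Ints_eq_if_dist_less_1:
  fixes a b :: real
  assumes "a \<in> \<int>" "b \<in> \<int>" "\<bar>a - b\<bar> < 1"
  shows "a = b"
  using assms Ints_nonzero_abs_less1[of "a - b"] by auto

lemma int_vecs_norm_diff_ge_1:
  assumes "c \<in> int_vecs" "c' \<in> int_vecs" "c \<noteq> c'"
  shows "1 \<le> norm (c - c')"
proof -
  obtain i where i: "c $ i \<noteq> c' $ i"
    using assms(3) by (metis vec_eq_iff)
  have "1 \<le> \<bar>c $ i - c' $ i\<bar>"
    using Ints_eq_if_dist_less_1[of "c $ i" "c' $ i"] assms i by (force simp: int_vecs_def)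
  also have "\<dots> \<le> norm (c - c')"
    using component_le_norm_cart[of "c - c'" i] by simp
  finally show ?thesis .
qed

lemma norm_le_sqrt_CARD:
  fixes t :: "real^'k"
  assumes "\<And>i. \<bar>t $ i\<bar> \<le> 1"
  shows "norm t \<le> sqrt CARD('k)"
proof -
  have "norm t = sqrt (\<Sum>i\<in>UNIV. (t $ i)\<^sup>2)"
    by (simp add: norm_vec_def L2_set_def)
  also have "\<dots> \<le> sqrt (\<Sum>i\<in>(UNIV::'k set). 1)"
    using assms by (intro real_sqrt_le_mono sum_mono) (simp add: abs_square_le_1)
  finally show ?thesis by simp
qed

lemma card_separated_in_ball_finite:
  fixes P :: "'a::euclidean_space set"
  assumes \<delta>: "\<delta> > 0" and r: "r \<ge> 0" and P: "finite P" "P \<subseteq> ball g r"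
    and sep: "\<And>x y. x \<in> P \<Longrightarrow> y \<in> P \<Longrightarrow> x \<noteq> y \<Longrightarrow> \<delta> \<le> dist x y"
  shows "real (card P) * (\<delta>/2) ^ DIM('a) \<le> (r + \<delta>/2) ^ DIM('a)"
proof -
  let ?balls = "(\<lambda>x. ball x (\<delta>/2)) ` P"
  have disj: "pairwise (\<lambda>x y. negligible (ball x (\<delta>/2) \<inter> ball y (\<delta>/2))) P"
  proof (rule pairwiseI)
    fix x y assume "x \<in> P" "y \<in> P" "x \<noteq> y"
    then have "\<delta> \<le> dist x y" using sep by blast
    then have "ball x (\<delta>/2) \<inter> ball y (\<delta>/2) = {}"
      using dist_triangle_half_l[of x _ \<delta> y] by fastforce
    then show "negligible (ball x (\<delta>/2) \<inter> ball y (\<delta>/2))" by simp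
  qed
  have "\<Union>?balls \<subseteq> ball g (r + \<delta>/2)"
  proof (clarify)
    fix x z assume "x \<in> P" "z \<in> ball x (\<delta>/2)"
    then have "dist g x < r" "dist z x < \<delta>/2"
      using P by (auto simp: dist_commute)
    then show "z \<in> ball g (r + \<delta>/2)"
      using dist_triangle_less_add[of g x r z "\<delta>/2"] by simp
  qed
  then have "measure lebesgue (\<Union>?balls) \<le> measure lebesgue (ball g (r + \<delta>/2))"
    using P by (intro measure_mono_fmeasurable) auto
  also have "measure lebesgue (\<Union>?balls) = (\<Sum>x\<in>P. measure lebesgue (ball x (\<delta>/2)))"
    using P disj by (intro measure_negligible_finite_Union_image) auto
  finally have "real (card P) * (unit_ball_vol DIM('a) * (\<delta>/2) ^ DIM('a))
      \<le> unit_ball_vol DIM('a) * (r + \<delta>/2) ^ DIM('a)"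
    using \<delta> r by (simp add: content_ball)
  then show ?thesis
    by (simp add: mult.left_commute[of "real (card P)"])
qed

lemma card_separated_in_ball:
  fixes P :: "'a::euclidean_space set"
  assumes \<delta>: "\<delta> > 0" and r: "r \<ge> 0" and sub: "P \<subseteq> ball g r"
    and sep: "\<And>x y. x \<in> P \<Longrightarrow> y \<in> P \<Longrightarrow> x \<noteq> y \<Longrightarrow> \<delta> \<le> dist x y"
  shows "finite P" and "real (card P) * (\<delta>/2) ^ DIM('a) \<le> (r + \<delta>/2) ^ DIM('a)"
proof -
  have bound: "real (card F) * (\<delta>/2) ^ DIM('a) \<le> (r + \<delta>/2) ^ DIM('a)" if "F \<subseteq> P" "finite F" for F
    using that sub by (intro card_separated_in_ball_finite[OF \<delta> r]) (auto intro: sep)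
  define N where "N = nat \<lfloor>(r + \<delta>/2) ^ DIM('a) / (\<delta>/2) ^ DIM('a)\<rfloor>"
  have "card F \<le> N" if "F \<subseteq> P" "finite F" for F
    using bound[OF that] \<delta> by (simp add: N_def le_nat_floor pos_le_divide_eq)
  then show "finite P"
    using finite_if_finite_subsets_card_bdd by blast
  then show "real (card P) * (\<delta>/2) ^ DIM('a) \<le> (r + \<delta>/2) ^ DIM('a)"
    by (rule bound[OF order_refl])
qed

lemma card_int_vecs_near_le_spectral:
  fixes A :: "real^'k \<Rightarrow> real^'k" and g :: "real^'k"
  assumes A: "linear A" and \<sigma>: "\<sigma> > 0" "\<And>x. \<sigma> * norm x \<le> norm (A x)" and r: "r \<ge> 0"
  defines "Y \<equiv> {y \<in> int_vecs. norm (A y - g) < r}"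
  shows "finite Y" and "real (card Y) \<le> (1 + 2 * r / \<sigma>) ^ CARD('k)"
proof -
  have sep: "\<sigma> \<le> dist (A x) (A y)" if "x \<in> Y" "y \<in> Y" "x \<noteq> y" for x y
  proof -
    have "\<sigma> * 1 \<le> \<sigma> * norm (x - y)"
      using int_vecs_norm_diff_ge_1[of x y] that \<sigma>(1) by (intro mult_left_mono) (auto simp: Y_def)
    also have "\<dots> \<le> norm (A (x - y))" by (rule \<sigma>(2))
    finally show ?thesis by (simp add: dist_norm linear_diff[OF A])
  qed
  then have inj: "inj_on A Y"
    using \<sigma>(1) by (intro inj_onI) (metis dist_self not_less)
  have sub: "A ` Y \<subseteq> ball g r"
    by (auto simp: Y_def dist_norm norm_minus_commute)
  have sepA: "\<sigma> \<le> dist u v" if "u \<in> A ` Y" "v \<in> A ` Y" "u \<noteq> v" for u v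
    using that sep by blast
  have "finite (A ` Y)"
    by (rule card_separated_in_ball(1)[OF \<sigma>(1) r sub sepA])
  then show "finite Y"
    using inj finite_imageD by blast
  have "real (card Y) * (\<sigma>/2) ^ CARD('k) \<le> (r + \<sigma>/2) ^ CARD('k)"
    using card_separated_in_ball(2)[OF \<sigma>(1) r sub sepA] by (simp add: card_image[OF inj])
  also have "r + \<sigma>/2 = (1 + 2 * r / \<sigma>) * (\<sigma>/2)"
    using \<sigma>(1) by (simp add: field_simps)
  finally have "real (card Y) * (\<sigma>/2) ^ CARD('k) \<le> (1 + 2 * r / \<sigma>) ^ CARD('k) * (\<sigma>/2) ^ CARD('k)"
    by (simp only: power_mult_distrib)
  then show "real (card Y) \<le> (1 + 2 * r / \<sigma>) ^ CARD('k)"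
    using \<sigma>(1) by simp
qed

lemma measure_unit_cubes_int_vecs:
  fixes Y :: "(real^'k) set"
  assumes Y: "finite Y" "Y \<subseteq> int_vecs"
  shows "(\<Union>c\<in>Y. box c (c + 1)) \<in> lmeasurable"
    and "measure lebesgue (\<Union>c\<in>Y. box c (c + 1)) = real (card Y)"
proof -
  have disj: "pairwise (\<lambda>c c'. negligible (box c (c + 1) \<inter> box c' (c' + 1))) Y"
  proof (rule pairwiseI)
    fix c c' assume cc': "c \<in> Y" "c' \<in> Y" "c \<noteq> c'"
    have "box c (c + 1) \<inter> box c' (c' + 1) = {}"
    proof (rule equals0I)
      fix x assume "x \<in> box c (c + 1) \<inter> box c' (c' + 1)"
      then have "\<bar>c $ i - c' $ i\<bar> < 1" for i
        by (simp add: mem_box_cart) (smt (verit))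
      then have "c $ i = c' $ i" for i
        using cc' Y(2) by (intro Ints_eq_if_dist_less_1) (auto simp: int_vecs_def)
      then show False using cc'(3) by (simp add: vec_eq_iff)
    qed
    then show "negligible (box c (c + 1) \<inter> box c' (c' + 1))" by simp
  qed
  show "(\<Union>c\<in>Y. box c (c + 1)) \<in> lmeasurable"
    using Y(1) by (intro fmeasurable.finite_UN) auto
  have "measure lebesgue (\<Union>c\<in>Y. box c (c + 1)) = (\<Sum>c\<in>Y. measure lebesgue (box c (c + 1)))"
    using Y(1) disj by (intro measure_negligible_finite_Union_image) auto
  also have "\<dots> = real (card Y)"
    by (simp add: measure_lborel_box_eq inner_add_left Basis_vec_def inner_axis prod.neutral)
  finally show "measure lebesgue (\<Union>c\<in>Y. box c (c + 1)) = real (card Y)" .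
qed

lemma card_int_vecs_near_le_volume:
  fixes A :: "real^'k::{finite,wellorder} \<Rightarrow> real^'k::{finite,wellorder}"
  assumes A: "linear A" and K: "\<And>x. norm (A x) \<le> K * norm x" and r: "r \<ge> 0"
    and Y: "finite Y" "Y \<subseteq> {y \<in> int_vecs. norm (A y - g) < r}"
  shows "\<bar>det (matrix A)\<bar> * real (card Y) \<le> unit_ball_vol CARD('k) * (r + sqrt CARD('k) * K) ^ CARD('k)"
proof -
  let ?U = "\<Union>c\<in>Y. box c (c + 1)"
  have U: "?U \<in> lmeasurable" "measure lebesgue ?U = real (card Y)"
    using measure_unit_cubes_int_vecs[of Y] Y by auto
  define R where "R = r + sqrt CARD('k) * K"
  have "0 \<le> K"
    using K[of "axis undefined 1"] by (simp add: norm_axis_1) (meson norm_ge_zero order_trans)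
  have "A ` ?U \<subseteq> cball g R"
  proof
    fix y assume "y \<in> A ` ?U"
    then obtain c x where c: "c \<in> Y" "x \<in> box c (c + 1)" "y = A x" by auto
    have "c $ i < x $ i \<and> x $ i < c $ i + 1" for i
      using c(2) by (simp add: mem_box_cart)
    then have "norm (x - c) \<le> sqrt CARD('k)"
      by (intro norm_le_sqrt_CARD) (smt (verit) vector_minus_component)
    then have "norm (A (x - c)) \<le> K * sqrt CARD('k)"
      using K[of "x - c"] mult_left_mono[OF _ \<open>0 \<le> K\<close>] by fastforce
    moreover have "norm (A c - g) < r"
      using c(1) Y(2) by auto
    moreover have "norm (A x - g) \<le> norm (A c - g) + norm (A (x - c))"
      using norm_triangle_ineq[of "A c - g" "A (x - c)"] by (simp add: linear_diff[OF A])
    ultimately have "norm (A x - g) \<le> R"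
      by (simp add: R_def mult.commute)
    then show "y \<in> cball g R"
      using c(3) by (simp add: dist_norm norm_minus_commute)
  qed
  then have "measure lebesgue (A ` ?U) \<le> measure lebesgue (cball g R)"
    using measurable_linear_image[OF A U(1)] by (intro measure_mono_fmeasurable) auto
  moreover have "measure lebesgue (A ` ?U) = \<bar>det (matrix A)\<bar> * real (card Y)"
    using measure_linear_image[OF A U(1)] U(2) by simp
  ultimately show ?thesis
    using r \<open>0 \<le> K\<close> by (simp add: content_cball R_def)
qed

section \<open>Relabelling coordinates by a well-ordered copy of the index type\<close>

text \<open>\<open>measure_linear_image\<close> needs a well-ordered index type, which \<open>'m\<close> need not be.\<close>

typedef 'a ord_copy = "UNIV :: 'a set" by simp

instance ord_copy :: (finite) finite
  by standard (metis type_definition.Abs_image[OF type_definition_ord_copy] finite_imageI finite)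

instantiation ord_copy :: (finite) wellorder
begin

definition less_eq_ord_copy :: "'a ord_copy \<Rightarrow> 'a ord_copy \<Rightarrow> bool" where
  "x \<le> y \<longleftrightarrow> to_nat (Rep_ord_copy x) \<le> to_nat (Rep_ord_copy y)"

definition less_ord_copy :: "'a ord_copy \<Rightarrow> 'a ord_copy \<Rightarrow> bool" where
  "x < y \<longleftrightarrow> to_nat (Rep_ord_copy x) < to_nat (Rep_ord_copy y)"

instance
proof
  fix P :: "'a ord_copy \<Rightarrow> bool" and a
  assume step: "\<And>x. (\<And>y. y < x \<Longrightarrow> P y) \<Longrightarrow> P x"
  have "\<forall>x. to_nat (Rep_ord_copy x) = n \<longrightarrow> P x" for n
    by (induction n rule: less_induct) (use step in \<open>auto simp: less_ord_copy_def\<close>)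
  then show "P a" by blast
qed (auto simp: less_eq_ord_copy_def less_ord_copy_def Rep_ord_copy_inject)

end

lemma card_ord_copy [simp]: "CARD('a::finite ord_copy) = CARD('a)"
proof (rule bij_betw_same_card)
  show "bij_betw Rep_ord_copy UNIV UNIV"
    by (rule bij_betw_byWitness[of _ Abs_ord_copy]) (auto simp: Rep_ord_copy_inverse Abs_ord_copy_inverse)
qed

lemma det_reindex:
  fixes G :: "'a::comm_ring_1^'m^'m" and r :: "'k::finite \<Rightarrow> 'm"
  assumes "bij r"
  shows "det (\<chi> i j. G $ r i $ r j) = det G"
proof -
  have inj: "inj r" and bij: "bij_betw r UNIV UNIV" and bij_inv: "bij_betw (inv r) UNIV UNIV"
    using assms by (auto simp: bij_is_inj bij_imp_bij_inv)
  have inv: "inv r (r x) = x" and inv': "r (inv r y) = y" for x y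
    using assms by (simp_all add: bij_is_inj bij_is_surj surj_f_inv_f)
  have "det G = (\<Sum>p | p permutes (UNIV::'m set). of_int (sign p) * (\<Prod>a\<in>UNIV. G $ a $ p a))"
    by (simp add: det_def)
  also have "\<dots> = (\<Sum>q | q permutes (UNIV::'k set). of_int (sign q) * (\<Prod>i\<in>UNIV. G $ r i $ r (q i)))"
  proof (rule sym, rule sum.reindex_bij_witness[of _ "map_permutation UNIV (inv r)" "map_permutation UNIV r"])
    fix q :: "'k \<Rightarrow> 'k" assume q: "q \<in> {q. q permutes UNIV}"
    show "map_permutation UNIV (inv r) (map_permutation UNIV r q) = q"
      using q by (intro map_permutation_compose_inv bij) (auto simp: inv)
    show "map_permutation UNIV r q \<in> {p. p permutes UNIV}"
      using q map_permutation_permutes[OF bij] by auto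
    have "map_permutation UNIV r q a = r (q (inv r a))" for a
      using map_permutation_apply[OF inj, of "inv r a" q] by (simp add: inv')
    then have "(\<Prod>a\<in>UNIV. G $ a $ map_permutation UNIV r q a) = (\<Prod>i\<in>UNIV. G $ r i $ r (q i))"
      by (intro prod.reindex_bij_witness[of _ r "inv r"]) (auto simp: inv inv')
    then show "of_int (sign (map_permutation UNIV r q)) * (\<Prod>a\<in>UNIV. G $ a $ map_permutation UNIV r q a)
        = of_int (sign q) * (\<Prod>i\<in>UNIV. G $ r i $ r (q i))"
      using q by (simp add: sign_map_permutation[OF inj])
  next
    fix p :: "'m \<Rightarrow> 'm" assume p: "p \<in> {p. p permutes UNIV}"
    show "map_permutation UNIV (inv r) p \<in> {q. q permutes UNIV}"
      using p map_permutation_permutes[OF bij_inv] by blast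
    show "map_permutation UNIV r (map_permutation UNIV (inv r) p) = p"
      using p bij_inv by (intro map_permutation_compose_inv) (auto simp: inv')
  qed
  also have "\<dots> = det (\<chi> i j. G $ r i $ r j)"
    by (simp add: det_def)
  finally show ?thesis ..
qed

definition relabel :: "real^'a ord_copy \<Rightarrow> real^'a" where
  "relabel y = (\<chi> i. y $ Abs_ord_copy i)"

lemma linear_relabel: "linear relabel"
  by (rule linearI) (simp_all add: relabel_def vec_eq_iff)

lemma inj_relabel: "inj relabel"
proof (rule injI)
  fix x y :: "real^'a ord_copy" assume "relabel x = relabel y"
  then have "x $ Abs_ord_copy i = y $ Abs_ord_copy i" for i
    by (simp add: relabel_def vec_eq_iff)
  then show "x = y"
    by (metis vec_eq_iff Rep_ord_copy_inverse)
qed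

lemma norm_relabel [simp]: "norm (relabel y) = norm y"
proof -
  have "(\<Sum>i\<in>UNIV. (y $ Abs_ord_copy i)\<^sup>2) = (\<Sum>j\<in>UNIV. (y $ j)\<^sup>2)"
    by (rule sum.reindex_bij_witness[of _ Rep_ord_copy Abs_ord_copy])
       (simp_all add: Abs_ord_copy_inverse Rep_ord_copy_inverse)
  then show ?thesis by (simp add: norm_vec_def L2_set_def relabel_def)
qed

lemma relabel_axis: "relabel (axis j 1) = axis (Rep_ord_copy j) 1"
  by (auto simp: relabel_def vec_eq_iff axis_def Abs_ord_copy_inverse Rep_ord_copy_inverse)

lemma relabel_image_int_vecs: "relabel ` int_vecs = int_vecs"
proof
  show "relabel ` int_vecs \<subseteq> int_vecs"
    by (auto simp: relabel_def int_vecs_def)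
  show "int_vecs \<subseteq> relabel ` int_vecs"
  proof
    fix x assume "x \<in> int_vecs"
    then have "(\<chi> j. x $ Rep_ord_copy j) \<in> int_vecs" "x = relabel (\<chi> j. x $ Rep_ord_copy j)"
      by (auto simp: int_vecs_def relabel_def vec_eq_iff Abs_ord_copy_inverse)
    then show "x \<in> relabel ` int_vecs" by blast
  qed
qed

section \<open>An isometric square model of the lattice\<close>

lemma norm_matrix_vector_le_spec_norm: "norm (B *v x) \<le> spec_norm B * norm x"
  unfolding spec_norm_def by (rule onorm) (simp add: linear_conv_bounded_linear)

lemma linear_isometry_on_subspace_inner:
  assumes "linear f" "subspace V" "\<And>x. x \<in> V \<Longrightarrow> norm (f x) = norm x" "u \<in> V" "v \<in> V"
  shows "f u \<bullet> f v = u \<bullet> v"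
proof -
  have "f w \<bullet> f w = w \<bullet> w" if "w \<in> V" for w
    using assms(3)[OF that] by (simp add: power2_norm_eq_inner[symmetric])
  moreover have "u + v \<in> V" using assms(2,4,5) by (rule subspace_add)
  ultimately have "(f u + f v) \<bullet> (f u + f v) = (u + v) \<bullet> (u + v)"
    by (metis assms(1) linear_add)
  then show ?thesis
    using \<open>\<And>w. w \<in> V \<Longrightarrow> f w \<bullet> f w = w \<bullet> w\<close> assms(4,5)
    by (simp add: inner_add_left inner_add_right inner_commute)
qed

lemma subspace_projection_dist_le:
  fixes V :: "'a::euclidean_space set"
  assumes "subspace V"
  obtains p where "p \<in> V" "\<And>v. v \<in> V \<Longrightarrow> dist v p \<le> dist v z"
proof -
  obtain p w where p: "p \<in> span V" and w: "\<And>v. v \<in> span V \<Longrightarrow> orthogonal w v" and z: "z = p + w"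
    using orthogonal_subspace_decomp_exists by metis
  have "dist v p \<le> dist v z" if "v \<in> V" for v
  proof -
    have "orthogonal (v - p) (- w)"
      using w[of "v - p"] that p assms
      by (simp add: span_diff span_base orthogonal_commute orthogonal_def)
    then have "(norm ((v - p) + - w))\<^sup>2 = (norm (v - p))\<^sup>2 + (norm w)\<^sup>2"
      by (subst norm_add_Pythagorean) simp_all
    moreover have "(v - p) + - w = v - z"
      by (simp add: z)
    ultimately have "(norm (v - z))\<^sup>2 = (norm (v - p))\<^sup>2 + (norm w)\<^sup>2"
      by metis
    then have "(norm (v - p))\<^sup>2 \<le> (norm (v - z))\<^sup>2"
      by simp
    then show ?thesis
      unfolding dist_norm by (rule power2_le_imp_le) simp
  qed
  moreover have "p \<in> V"
    using p assms by (metis span_eq_iff)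
  ultimately show ?thesis
    using that by blast
qed

lemma isometric_model_of_injective_linear:
  fixes P :: "real^'k \<Rightarrow> real^'d"
  assumes P: "linear P" "inj P"
  obtains A :: "real^'k \<Rightarrow> real^'k"
  where "linear A" "\<And>x y. A x \<bullet> A y = P x \<bullet> P y"
    and "\<And>z. \<exists>g. \<forall>y. norm (A y - g) \<le> norm (z - P y)"
proof -
  let ?V = "range P"
  have V: "subspace ?V"
    by (metis P(1) span_UNIV span_linear_image subspace_span)
  have "dim ?V = dim (UNIV :: (real^'k) set)"
    using P by (intro dim_image_eq) (auto simp: inj_on_def inj_def)
  then obtain f :: "real^'d \<Rightarrow> real^'k"
    where f: "linear f" "\<And>x. x \<in> ?V \<Longrightarrow> norm (f x) = norm x"
    by (rule isometries_subspaces[OF V subspace_UNIV]) blast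
  have inner: "(f \<circ> P) x \<bullet> (f \<circ> P) y = P x \<bullet> P y" for x y
    using linear_isometry_on_subspace_inner[OF f(1) V f(2)] by simp
  have "\<exists>g. \<forall>y. norm ((f \<circ> P) y - g) \<le> norm (z - P y)" for z
  proof -
    obtain p where p: "p \<in> ?V" "\<And>v. v \<in> ?V \<Longrightarrow> dist v p \<le> dist v z"
      using subspace_projection_dist_le[OF V] by metis
    have "norm (f (P y) - f p) \<le> norm (z - P y)" for y
    proof -
      have "norm (f (P y) - f p) = norm (P y - p)"
        using p f V by (simp add: linear_diff[OF f(1), symmetric] subspace_diff)
      also have "\<dots> \<le> norm (z - P y)"
        using p(2)[of "P y"] by (simp add: dist_norm norm_minus_commute)
      finally show ?thesis .
    qed
    then show ?thesis by auto
  qed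
  then show ?thesis
    using that[of "f \<circ> P"] linear_compose[OF P(1) f(1)] inner by blast
qed

lemma gram_matrix_of_linear:
  fixes P :: "real^'k \<Rightarrow> real^'d"
  assumes "linear P"
  shows "transpose (matrix P) ** matrix P = (\<chi> i j. P (axis i 1) \<bullet> P (axis j 1))"
  using assms
  by (simp add: matrix_mult_transpose_dot_column matrix_vector_mult_basis[symmetric] matrix_works
      linear_matrix_vector_mul_eq)

lemma abs_det_eq_sqrt_det_gram:
  fixes A :: "real^'k \<Rightarrow> real^'k" and P :: "real^'k \<Rightarrow> real^'d"
  assumes "linear A" "linear P" "\<And>x y. A x \<bullet> A y = P x \<bullet> P y"
  shows "\<bar>det (matrix A)\<bar> = sqrt (det (transpose (matrix P) ** matrix P))"
proof -
  have "transpose (matrix P) ** matrix P = transpose (matrix A) ** matrix A"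
    by (simp add: gram_matrix_of_linear assms)
  then show ?thesis
    by (simp add: det_mul power2_eq_square[symmetric])
qed

lemma vol_det_relabel:
  fixes B :: "real^'m^'d"
  shows "sqrt (det (transpose (matrix (\<lambda>y. B *v relabel y)) ** matrix (\<lambda>y. B *v relabel y))) = vol_det B"
proof -
  have lin: "linear (\<lambda>y. B *v relabel y)"
    using linear_compose[OF linear_relabel matrix_vector_mul_linear] by (simp add: o_def)
  have "transpose (matrix (\<lambda>y. B *v relabel y)) ** matrix (\<lambda>y. B *v relabel y)
      = (\<chi> i j. (transpose B ** B) $ Rep_ord_copy i $ Rep_ord_copy j)"
    by (simp add: gram_matrix_of_linear[OF lin] relabel_axis,
        simp add: matrix_mult_transpose_dot_column matrix_vector_mult_basis)
  moreover have "bij (Rep_ord_copy :: 'm ord_copy \<Rightarrow> 'm)"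
    by (metis bij_betw_byWitness Rep_ord_copy_inverse Abs_ord_copy_inverse UNIV_I subset_UNIV)
  ultimately show ?thesis
    by (simp add: det_reindex vol_det_def)
qed

lemma lattice_ball_isometric_model:
  fixes B :: "real^'m^'d" and z :: "real^'d"
  assumes inj: "inj ((*v) B)"
  obtains A :: "real^'m ord_copy \<Rightarrow> real^'m ord_copy" and g
  where "linear A" "\<And>y. norm (A y) = norm (B *v relabel y)" "\<bar>det (matrix A)\<bar> = vol_det B"
    and "{f \<in> lattice B. norm (z - f) < r}
           \<subseteq> (\<lambda>y. B *v relabel y) ` {y \<in> int_vecs. norm (A y - g) < r}"
proof -
  define P :: "real^'m ord_copy \<Rightarrow> real^'d" where "P = (\<lambda>y. B *v relabel y)"
  have P: "linear P" "inj P"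
    unfolding P_def
    using linear_compose[OF linear_relabel matrix_vector_mul_linear] inj_compose[OF inj inj_relabel]
    by (simp_all only: o_def)
  obtain A :: "real^'m ord_copy \<Rightarrow> real^'m ord_copy" where A: "linear A" "\<And>x y. A x \<bullet> A y = P x \<bullet> P y"
    and near: "\<And>z. \<exists>g. \<forall>y. norm (A y - g) \<le> norm (z - P y)"
    by (rule isometric_model_of_injective_linear[OF P]) (rule that)
  obtain g where g: "\<And>y. norm (A y - g) \<le> norm (z - P y)"
    using near by metis
  have "norm (A y) = norm (B *v relabel y)" for y
    using A(2)[of y y] by (simp add: P_def norm_eq_sqrt_inner)
  moreover have "\<bar>det (matrix A)\<bar> = vol_det B"
    using abs_det_eq_sqrt_det_gram[OF A(1) P(1) A(2)] vol_det_relabel by (simp add: P_def)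
  moreover have "P ` int_vecs = (*v) B ` relabel ` int_vecs"
    by (simp add: P_def image_image)
  then have "lattice B = P ` int_vecs"
    by (simp only: relabel_image_int_vecs lattice_eq_image_int_vecs)
  then have "{f \<in> lattice B. norm (z - f) < r} \<subseteq> P ` {y \<in> int_vecs. norm (A y - g) < r}"
    using g by (force intro: le_less_trans)
  ultimately show ?thesis
    using that[OF A(1)] by (simp add: P_def)
qed

lemma card_lattice_ball_le_spectral:
  fixes B :: "real^'m^'d" and z :: "real^'d"
  assumes inj: "inj ((*v) B)" and r: "r \<ge> 0"
  shows "real (card {f \<in> lattice B. norm (z - f) < r}) \<le> (1 + 2 * r / sigma_min B) ^ CARD('m)"
proof -
  obtain A :: "real^'m ord_copy \<Rightarrow> real^'m ord_copy" and g
    where A: "linear A" "\<And>y. norm (A y) = norm (B *v relabel y)" "\<bar>det (matrix A)\<bar> = vol_det B"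
      and sub: "{f \<in> lattice B. norm (z - f) < r}
                  \<subseteq> (\<lambda>y. B *v relabel y) ` {y \<in> int_vecs. norm (A y - g) < r}"
    by (rule lattice_ball_isometric_model[OF inj]) (rule that)
  have "sigma_min B * norm y \<le> norm (A y)" for y
    using sigma_min_mult_norm_le[of B "relabel y"] by (simp add: A(2))
  note Y = card_int_vecs_near_le_spectral[OF A(1) sigma_min_pos[OF inj] this r, of g]
  have "card {f \<in> lattice B. norm (z - f) < r} \<le> card {y \<in> int_vecs. norm (A y - g) < r}"
    by (rule surj_card_le[OF Y(1) sub])
  then have "real (card {f \<in> lattice B. norm (z - f) < r}) \<le> real (card {y \<in> int_vecs. norm (A y - g) < r})"
    by (simp only: of_nat_le_iff)
  also have "\<dots> \<le> (1 + 2 * r / sigma_min B) ^ CARD('m)"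
    using Y(2) by simp
  finally show ?thesis .
qed

lemma card_lattice_ball_le_volume:
  fixes B :: "real^'m^'d" and z :: "real^'d"
  assumes inj: "inj ((*v) B)" and r: "r \<ge> 0"
  shows "real (card {f \<in> lattice B. norm (z - f) < r})
           \<le> unit_ball_vol CARD('m) * (r + sqrt CARD('m) * spec_norm B) ^ CARD('m) / vol_det B"
proof -
  obtain A :: "real^'m ord_copy \<Rightarrow> real^'m ord_copy" and g
    where A: "linear A" "\<And>y. norm (A y) = norm (B *v relabel y)" "\<bar>det (matrix A)\<bar> = vol_det B"
      and sub: "{f \<in> lattice B. norm (z - f) < r}
                  \<subseteq> (\<lambda>y. B *v relabel y) ` {y \<in> int_vecs. norm (A y - g) < r}"
    by (rule lattice_ball_isometric_model[OF inj]) (rule that)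
  let ?Y = "{y \<in> int_vecs. norm (A y - g) < r}"
  have \<sigma>: "sigma_min B * norm y \<le> norm (A y)" for y
    using sigma_min_mult_norm_le[of B "relabel y"] by (simp add: A(2))
  note fin = card_int_vecs_near_le_spectral(1)[OF A(1) sigma_min_pos[OF inj] \<sigma> r, of g]
  have "norm (A y) \<le> spec_norm B * norm y" for y
    using norm_matrix_vector_le_spec_norm[of B "relabel y"] by (simp add: A(2))
  then have vol: "vol_det B * real (card ?Y)
      \<le> unit_ball_vol CARD('m) * (r + sqrt CARD('m) * spec_norm B) ^ CARD('m)"
    using card_int_vecs_near_le_volume[OF A(1) _ r fin order_refl] by (simp add: A(3))
  have "inj A"
    unfolding linear_injective_0[OF A(1)]
  proof (intro allI impI)
    fix y assume "A y = 0"
    then have "sigma_min B * norm y \<le> 0"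
      using \<sigma>[of y] by simp
    then show "y = 0"
      using sigma_min_pos[OF inj] by (simp add: mult_le_0_iff)
  qed
  then have "vol_det B > 0"
    using det_nz_iff_inj[OF A(1)] A(3) by simp
  have "card {f \<in> lattice B. norm (z - f) < r} \<le> card ?Y"
    by (rule surj_card_le[OF fin sub])
  then have "real (card {f \<in> lattice B. norm (z - f) < r}) \<le> real (card ?Y)"
    by (simp only: of_nat_le_iff)
  also have "real (card ?Y) \<le> unit_ball_vol CARD('m) * (r + sqrt CARD('m) * spec_norm B) ^ CARD('m) / vol_det B"
    using vol by (simp add: pos_le_divide_eq[OF \<open>vol_det B > 0\<close>] mult.commute[of "real (card ?Y)"])
  finally show ?thesis .
qed

theorem lemma10p2:
  fixes B :: "real^'m^'d" and L :: "(real^'d) set" and D T :: real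
  assumes indep: "inj (\<lambda>c. B *v c)"
    and finL: "finite L" and D: "D > 0" and T: "T > 0"
  defines "kt \<equiv> card {f \<in> lattice B. \<exists>f'\<in>L. norm (f' - f) < D / T}"
  shows "real kt \<le> real (card L) * (1 + 2 * D / (T * sigma_min B)) ^ CARD('m)
    \<and> real kt \<le> real (card L) * (D / T + sqrt (real CARD('m)) * spec_norm B) ^ CARD('m)
                   * (pi powr (real CARD('m) / 2) / Gamma (real CARD('m) / 2 + 1))
                   * (1 / vol_det B)"
proof -
  define S where "S z = {f \<in> lattice B. norm (z - f) < D / T}" for z
  have r: "D / T \<ge> 0" using D T by simp
  have "{f \<in> lattice B. \<exists>f'\<in>L. norm (f' - f) < D / T} = (\<Union>z\<in>L. S z)"
    by (auto simp: S_def)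
  then have "real kt \<le> (\<Sum>z\<in>L. real (card (S z)))"
    unfolding kt_def using card_UN_le[OF finL, of S] by (simp flip: of_nat_sum)
  moreover have "(\<Sum>z\<in>L. real (card (S z))) \<le> real (card L) * (1 + 2 * D / (T * sigma_min B)) ^ CARD('m)"
    using card_lattice_ball_le_spectral[OF indep r] by (intro sum_bounded_above) (simp add: S_def)
  moreover have "(\<Sum>z\<in>L. real (card (S z)))
      \<le> real (card L) * (unit_ball_vol CARD('m) * (D / T + sqrt CARD('m) * spec_norm B) ^ CARD('m) / vol_det B)"
    using card_lattice_ball_le_volume[OF indep r] by (intro sum_bounded_above) (simp add: S_def)
  ultimately show ?thesis
    by (simp add: unit_ball_vol_def mult_ac)
qed

end
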